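(* Let $f:A\to B$ be a ring homomorphism and let $\mathfrak b$ be an ideal of $B$. Let $A\bowtie^f\mathfrak b:=\{(a,f(a)+b): a\in A,\ b\in\mathfrak b\}$, a subring of $A\times B$. Assume that $f^{-1}(\mathfrak b)$ is a regular ideal of $A$ and $\mathfrak b$ is a regular ideal of $B$. Then the following are equivalent: (i) $A\bowtie^f\mathfrak b$ is a Prüfer ring; (ii) $A$ and $B$ are Prüfer rings and $\mathfrak b=B$.
   Context: All rings are commutative with identity. An element of a ring is regular if it is not a zerodivisor; an ideal is regular if it contains a regular element. A ring $R$ is a Prüfer ring if every regular finitely generated ideal of $R$ is invertible. *)

theory Defs
  imports "HOL-Algebra.Algebra"
begin

definition regular_elem :: "('a, 'm) ring_scheme \<Rightarrow> 'a \<Rightarrow> bool" where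
  "regular_elem R x \<longleftrightarrow> x \<in> carrier R \<and>
     (\<forall>y \<in> carrier R. x \<otimes>\<^bsub>R\<^esub> y = \<zero>\<^bsub>R\<^esub> \<longrightarrow> y = \<zero>\<^bsub>R\<^esub>)"

definition regular_ideal :: "('a, 'm) ring_scheme \<Rightarrow> 'a set \<Rightarrow> bool" where
  "regular_ideal R I \<longleftrightarrow> ideal I R \<and> (\<exists>x \<in> I. regular_elem R x)"

definition fg_ideal :: "('a, 'm) ring_scheme \<Rightarrow> 'a set \<Rightarrow> bool" where
  "fg_ideal R I \<longleftrightarrow> ideal I R \<and> (\<exists>S. finite S \<and> S \<subseteq> carrier R \<and> I = genideal R S)"

text \<open>Invertible ideal: I (R:I) = R inside the total quotient ring T(R), i.e.
  1 = sum_i a_i x_i with a_i in I and x_i in T(R) with x_i I \<subseteq> R.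
  Elements x_i of T(R) are written with a common regular denominator s,
  x_i = c_i / s; the condition x_i I \<subseteq> R reads c_i a \<in> s R for all a \<in> I,
  and sum_i a_i (c_i / s) = 1 reads sum_i a_i c_i = s.\<close>
definition invertible_ideal :: "('a, 'm) ring_scheme \<Rightarrow> 'a set \<Rightarrow> bool" where
  "invertible_ideal R I \<longleftrightarrow> ideal I R \<and>
     (\<exists>s n a c. regular_elem R s \<and>
        (\<forall>i < (n::nat). a i \<in> I \<and> c i \<in> carrier R \<and>
           (\<forall>x \<in> I. \<exists>r \<in> carrier R. c i \<otimes>\<^bsub>R\<^esub> x = s \<otimes>\<^bsub>R\<^esub> r)) \<and>
        finsum R (\<lambda>i. a i \<otimes>\<^bsub>R\<^esub> c i) {..<n} = s)"

definition pruefer_ring :: "('a, 'm) ring_scheme \<Rightarrow> bool" where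
  "pruefer_ring R \<longleftrightarrow> cring R \<and>
     (\<forall>I. fg_ideal R I \<and> regular_ideal R I \<longrightarrow> invertible_ideal R I)"

definition amalgamation ::
  "('a, 'm) ring_scheme \<Rightarrow> ('b, 'n) ring_scheme \<Rightarrow> ('a \<Rightarrow> 'b) \<Rightarrow> 'b set \<Rightarrow> ('a \<times> 'b) ring" where
  "amalgamation A B f J = (RDirProd A B)
     \<lparr>carrier := {(a, f a \<oplus>\<^bsub>B\<^esub> b) | a b. a \<in> carrier A \<and> b \<in> J}\<rparr>"

end

theory Submission
  imports Defs
begin

text \<open>
  If \<open>J = B\<close>, the amalgamation is just \<open>A \<times> B\<close>, and in a product of rings ideals,
  finite generation, regularity and invertibility all split componentwise, so \<open>A \<times> B\<close> is
  Pruefer exactly when \<open>A\<close> and \<open>B\<close> are.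

  Conversely, let \<open>R = A \<bowtie>\<^sup>f J\<close> be Pruefer and pick regular elements \<open>s\<^sub>0 \<in> f\<^sup>-\<^sup>1(J)\<close>
  and \<open>j\<^sub>0 \<in> J\<close>. The ideal \<open>G\<close> generated by \<open>(s\<^sub>0, j\<^sub>0)\<close> and \<open>(s\<^sub>0, 0)\<close> is regular and
  finitely generated, hence invertible. Every element of \<open>(R : G)\<close> maps both generators, and
  therefore all of \<open>G\<close>, into the ideal \<open>K = {(a, b) \<in> R. f a \<in> J}\<close>; hence
  \<open>R = G (R : G) \<subseteq> K\<close>, so \<open>1 \<in> J\<close>.
\<close>

section \<open>Ideals and regular elements\<close>

lemma ideal_zero_closed: "ideal I R \<Longrightarrow> \<zero>\<^bsub>R\<^esub> \<in> I"
  by (rule additive_subgroup.zero_closed[OF ideal.axioms(1)])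

lemma (in ring) regular_elem_cancel:
  assumes "regular_elem R s" "a \<in> carrier R" "b \<in> carrier R" "s \<otimes> a = s \<otimes> b"
  shows "a = b"
proof -
  have s: "s \<in> carrier R"
    using assms(1) unfolding regular_elem_def by blast
  have "s \<otimes> (a \<ominus> b) = s \<otimes> a \<ominus> s \<otimes> b"
    using s assms(2,3) by (simp add: minus_eq r_distr r_minus)
  also have "\<dots> = \<zero>"
    using s assms(3,4) by (simp add: minus_eq r_neg)
  finally have "a \<ominus> b = \<zero>"
    using assms(1-3) unfolding regular_elem_def by blast
  then have "a \<oplus> \<ominus> b \<oplus> b = b"
    using assms(3) by (simp add: minus_eq)
  then show ?thesis
    using assms(2,3) by (simp add: a_assoc l_neg)
qed

lemma (in ideal) finsum_mem:
  assumes "finite A" "\<And>i. i \<in> A \<Longrightarrow> f i \<in> I"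
  shows "finsum R f A \<in> I"
  using assms
proof (induction A rule: finite_induct)
  case empty
  show ?case
    by (simp add: ideal_zero_closed[OF ideal_axioms])
next
  case (insert i A)
  have "f \<in> A \<rightarrow> carrier R" "f i \<in> carrier R"
    using insert.prems Icarr by auto
  then have "finsum R f (insert i A) = f i \<oplus> finsum R f A"
    using insert.hyps by simp
  also have "\<dots> \<in> I"
    using insert by (intro additive_subgroup.a_closed[OF ideal_axioms[THEN ideal.axioms(1)]]) auto
  finally show ?case .
qed

lemma (in cring) ideal_scaled:
  assumes "s \<in> carrier R" "ideal K R"
  shows "ideal ((\<otimes>) s ` K) R"
proof (rule idealI)
  interpret K: ideal K R by fact
  have "group_hom (add_monoid R) (add_monoid R) ((\<otimes>) s)"
    using assms(1) by (intro group_hom.intro group_hom_axioms.intro homI a_group) (simp_all add: r_distr)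
  then show "subgroup ((\<otimes>) s ` K) (add_monoid R)"
    by (rule group_hom.subgroup_img_is_subgroup) (rule K.a_subgroup)
  fix x r assume "x \<in> (\<otimes>) s ` K" "r \<in> carrier R"
  then obtain t where "t \<in> K" "x = s \<otimes> t"
    by blast
  moreover have "r \<otimes> (s \<otimes> t) = s \<otimes> (r \<otimes> t)" "s \<otimes> t \<otimes> r = s \<otimes> (r \<otimes> t)"
    using assms(1) K.Icarr calculation \<open>r \<in> carrier R\<close> by (simp_all add: m_lcomm m_comm)
  ultimately show "r \<otimes> x \<in> (\<otimes>) s ` K" "x \<otimes> r \<in> (\<otimes>) s ` K"
    using \<open>r \<in> carrier R\<close> by (auto intro: K.I_l_closed)
qed (rule ring_axioms)

lemma (in ring_hom_ring) ideal_image: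
  assumes surj: "h ` carrier R = carrier S" and "ideal I R"
  shows "ideal (h ` I) S"
proof -
  interpret I: ideal I R by fact
  show ?thesis
  proof (rule idealI)
    show "ring S" ..
    show "subgroup (h ` I) (add_monoid S)"
      by (rule group_hom.subgroup_img_is_subgroup[OF a_group_hom I.a_subgroup])
  next
    fix a x assume "a \<in> h ` I" "x \<in> carrier S"
    then obtain b y where "b \<in> I" "a = h b" "y \<in> carrier R" "x = h y"
      using surj by (metis imageE)
    then have "x \<otimes>\<^bsub>S\<^esub> a = h (y \<otimes> b)" "a \<otimes>\<^bsub>S\<^esub> x = h (b \<otimes> y)"
      by (simp_all add: I.Icarr)
    with \<open>b \<in> I\<close> \<open>y \<in> carrier R\<close>
    show "x \<otimes>\<^bsub>S\<^esub> a \<in> h ` I" "a \<otimes>\<^bsub>S\<^esub> x \<in> h ` I"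
      by (metis I.I_l_closed image_eqI, metis I.I_r_closed image_eqI)
  qed
qed

lemma (in ring) genideal_insert_zero:
  assumes "S \<subseteq> carrier R"
  shows "genideal R (insert \<zero> S) = genideal R S"
proof
  have "\<zero> \<in> genideal R S"
    by (rule ideal_zero_closed[OF genideal_ideal[OF assms]])
  then show "genideal R (insert \<zero> S) \<subseteq> genideal R S"
    using assms by (intro genideal_minimal genideal_ideal) (auto dest: genideal_self)
  show "genideal R S \<subseteq> genideal R (insert \<zero> S)"
    using assms by (intro subset_Idl_subset) auto
qed

lemma fg_ideal_imp_ideal: "fg_ideal R I \<Longrightarrow> ideal I R"
  by (simp add: fg_ideal_def)

lemma fg_ideal_carrier:
  assumes "ring R"
  shows "fg_ideal R (carrier R)"
proof -
  interpret ring R by fact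
  show ?thesis
    unfolding fg_ideal_def
    by (intro conjI oneideal exI[of _ "{\<one>\<^bsub>R\<^esub>}"]) (simp_all add: genideal_one)
qed

lemma regular_ideal_carrier:
  assumes "ring R"
  shows "regular_ideal R (carrier R)"
proof -
  interpret ring R by fact
  show ?thesis
    by (auto simp: regular_ideal_def regular_elem_def oneideal intro!: bexI[of _ "\<one>\<^bsub>R\<^esub>"])
qed


section \<open>Invertible ideals\<close>

definition inverse_certificate ::
  "('a, 'm) ring_scheme \<Rightarrow> 'a set \<Rightarrow> 'a \<Rightarrow> nat \<Rightarrow> (nat \<Rightarrow> 'a) \<Rightarrow> (nat \<Rightarrow> 'a) \<Rightarrow> bool" where
  "inverse_certificate R I s n a c \<longleftrightarrow> regular_elem R s \<and>
     (\<forall>i < n. a i \<in> I \<and> c i \<in> carrier R \<and>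
        (\<forall>x \<in> I. \<exists>r \<in> carrier R. c i \<otimes>\<^bsub>R\<^esub> x = s \<otimes>\<^bsub>R\<^esub> r)) \<and>
     finsum R (\<lambda>i. a i \<otimes>\<^bsub>R\<^esub> c i) {..<n} = s"

lemma invertible_ideal_iff_certificate:
  "invertible_ideal R I \<longleftrightarrow> ideal I R \<and> (\<exists>s n a c. inverse_certificate R I s n a c)"
  unfolding invertible_ideal_def inverse_certificate_def by blast

lemma inverse_certificateI:
  assumes "regular_elem R s" "\<And>i. i < n \<Longrightarrow> a i \<in> I" "\<And>i. i < n \<Longrightarrow> c i \<in> carrier R"
    and "\<And>i x. i < n \<Longrightarrow> x \<in> I \<Longrightarrow> \<exists>r \<in> carrier R. c i \<otimes>\<^bsub>R\<^esub> x = s \<otimes>\<^bsub>R\<^esub> r"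
    and "finsum R (\<lambda>i. a i \<otimes>\<^bsub>R\<^esub> c i) {..<n} = s"
  shows "inverse_certificate R I s n a c"
  using assms unfolding inverse_certificate_def by blast

lemma inverse_certificateD:
  assumes "inverse_certificate R I s n a c"
  shows "regular_elem R s" "s \<in> carrier R" "i < n \<Longrightarrow> a i \<in> I" "i < n \<Longrightarrow> c i \<in> carrier R"
    and "i < n \<Longrightarrow> x \<in> I \<Longrightarrow> \<exists>r \<in> carrier R. c i \<otimes>\<^bsub>R\<^esub> x = s \<otimes>\<^bsub>R\<^esub> r"
    and "finsum R (\<lambda>i. a i \<otimes>\<^bsub>R\<^esub> c i) {..<n} = s"
  using assms unfolding inverse_certificate_def regular_elem_def by blast+

lemma (in ring) inverse_certificate_pad:
  assumes "ideal I R" "inverse_certificate R I s n a c" "n \<le> m"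
  shows "inverse_certificate R I s m (\<lambda>i. if i < n then a i else \<zero>) (\<lambda>i. if i < n then c i else \<zero>)"
proof -
  interpret I: ideal I R by fact
  note cert = inverse_certificateD[OF assms(2)]
  have zero: "\<zero> \<in> I"
    by (rule ideal_zero_closed[OF assms(1)])
  show ?thesis
  proof (rule inverse_certificateI)
    fix i x assume "i < m" "x \<in> I"
    show "\<exists>r \<in> carrier R. (if i < n then c i else \<zero>) \<otimes> x = s \<otimes> r"
    proof (cases "i < n")
      case True
      then show ?thesis using cert(5) \<open>x \<in> I\<close> by simp
    next
      case False
      have "\<zero> \<otimes> x = s \<otimes> \<zero>"
        using cert(2) I.Icarr[OF \<open>x \<in> I\<close>] by simp
      with False show ?thesis
        by (intro bexI[of _ \<zero>]) simp_all
    qed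
  next
    have "finsum R (\<lambda>i. (if i < n then a i else \<zero>) \<otimes> (if i < n then c i else \<zero>)) {..<m} =
        finsum R (\<lambda>i. a i \<otimes> c i) {..<n}"
    proof (rule add.finprod_mono_neutral_cong_right)
      show "(\<lambda>i. (if i < n then a i else \<zero>) \<otimes> (if i < n then c i else \<zero>)) \<in> {..<m} \<rightarrow> carrier R"
        using cert(3,4) I.Icarr by auto
    qed (use assms(3) in auto)
    then show "finsum R (\<lambda>i. (if i < n then a i else \<zero>) \<otimes> (if i < n then c i else \<zero>)) {..<m} = s"
      using cert(6) by simp
  qed (use cert(1,3,4) zero in auto)
qed

lemma inverse_certificate_image:
  assumes "ring_hom_ring R S h" "regular_elem S (h s)" "ideal I R"
    and "inverse_certificate R I s n a c"
  shows "inverse_certificate S (h ` I) (h s) n (h \<circ> a) (h \<circ> c)"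
proof -
  interpret h: ring_hom_ring R S h by fact
  interpret I: ideal I R by fact
  note cert = inverse_certificateD[OF assms(4)]
  show ?thesis
  proof (rule inverse_certificateI)
    fix i y assume "i < n" "y \<in> h ` I"
    from \<open>y \<in> h ` I\<close> obtain x where x: "x \<in> I" "y = h x"
      by blast
    obtain r where r: "r \<in> carrier R" "c i \<otimes>\<^bsub>R\<^esub> x = s \<otimes>\<^bsub>R\<^esub> r"
      using cert(5)[OF \<open>i < n\<close> x(1)] by (rule bexE)
    have "(h \<circ> c) i \<otimes>\<^bsub>S\<^esub> y = h (c i \<otimes>\<^bsub>R\<^esub> x)"
      unfolding x(2) comp_apply by (rule h.hom_mult[symmetric, OF cert(4)[OF \<open>i < n\<close>] I.Icarr[OF x(1)]])
    also have "\<dots> = h s \<otimes>\<^bsub>S\<^esub> h r"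
      unfolding r(2) by (rule h.hom_mult[OF cert(2) r(1)])
    finally show "\<exists>r \<in> carrier S. (h \<circ> c) i \<otimes>\<^bsub>S\<^esub> y = h s \<otimes>\<^bsub>S\<^esub> r"
      using h.hom_closed[OF r(1)] by blast
  next
    have "h s = finsum S (h \<circ> (\<lambda>i. a i \<otimes>\<^bsub>R\<^esub> c i)) {..<n}"
      unfolding cert(6)[symmetric] using cert(3,4) I.Icarr by (intro h.hom_finsum) auto
    also have "\<dots> = finsum S (\<lambda>i. (h \<circ> a) i \<otimes>\<^bsub>S\<^esub> (h \<circ> c) i) {..<n}"
      using cert(3,4) I.Icarr by (intro h.S.finsum_cong') auto
    finally show "finsum S (\<lambda>i. (h \<circ> a) i \<otimes>\<^bsub>S\<^esub> (h \<circ> c) i) {..<n} = h s" ..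
  next
    show "(h \<circ> a) i \<in> h ` I" "(h \<circ> c) i \<in> carrier S" if "i < n" for i
      using cert(3,4) that by auto
  qed (rule assms(2))
qed

text \<open>The last assumption says \<open>I (R : I) \<subseteq> K\<close>, elements of \<open>(R : I)\<close> being written \<open>c / s\<close>.\<close>

lemma (in cring) invertible_ideal_product_subset_imp_carrier:
  assumes "invertible_ideal R I" "ideal K R"
    and "\<And>s c x. regular_elem R s \<Longrightarrow> c \<in> carrier R \<Longrightarrow>
      \<forall>y \<in> I. \<exists>r \<in> carrier R. c \<otimes> y = s \<otimes> r \<Longrightarrow> x \<in> I \<Longrightarrow> c \<otimes> x \<in> (\<otimes>) s ` K"
  shows "K = carrier R"
proof -
  interpret K: ideal K R by fact
  obtain s n a c where "ideal I R" "inverse_certificate R I s n a c"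
    using assms(1) unfolding invertible_ideal_iff_certificate by blast
  note cert = inverse_certificateD[OF this(2)] and Icarr = ideal.Icarr[OF \<open>ideal I R\<close>]
  have "\<exists>t \<in> K. a i \<otimes> c i = s \<otimes> t" if "i < n" for i
  proof -
    have "c i \<otimes> a i \<in> (\<otimes>) s ` K"
      using assms(3) cert(1,4,5) cert(3)[OF that] that by blast
    then show ?thesis
      using m_comm[OF cert(4)[OF that] Icarr[OF cert(3)[OF that]]] by auto
  qed
  then obtain t where t: "\<And>i. i < n \<Longrightarrow> t i \<in> K" "\<And>i. i < n \<Longrightarrow> a i \<otimes> c i = s \<otimes> t i"
    by metis
  have t_carrier: "t \<in> {..<n} \<rightarrow> carrier R"
    using t(1) K.Icarr by blast
  have "s \<otimes> \<one> = finsum R (\<lambda>i. a i \<otimes> c i) {..<n}"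
    using cert(2,6) by simp
  also have "\<dots> = finsum R (\<lambda>i. s \<otimes> t i) {..<n}"
    using t(2) cert(2) t_carrier by (intro finsum_cong') auto
  also have "\<dots> = s \<otimes> finsum R t {..<n}"
    using cert(2) t_carrier by (simp add: finsum_rdistr)
  finally have "finsum R t {..<n} = \<one>"
    using regular_elem_cancel[OF cert(1) one_closed finsum_closed[OF t_carrier]] by simp
  moreover have "finsum R t {..<n} \<in> K"
    using t(1) by (intro K.finsum_mem) auto
  ultimately show ?thesis
    using K.one_imp_carrier by simp
qed


section \<open>Direct products of rings\<close>

lemma RDirProd_mult [simp]:
  "(a, b) \<otimes>\<^bsub>RDirProd A B\<^esub> (c, d) = (a \<otimes>\<^bsub>A\<^esub> c, b \<otimes>\<^bsub>B\<^esub> d)"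
  by (simp add: RDirProd_def DirProd_def monoid.defs)

lemma RDirProd_add [simp]:
  "(a, b) \<oplus>\<^bsub>RDirProd A B\<^esub> (c, d) = (a \<oplus>\<^bsub>A\<^esub> c, b \<oplus>\<^bsub>B\<^esub> d)"
  by (simp add: RDirProd_def monoid.defs)

lemma RDirProd_zero [simp]: "\<zero>\<^bsub>RDirProd A B\<^esub> = (\<zero>\<^bsub>A\<^esub>, \<zero>\<^bsub>B\<^esub>)"
  by (simp add: RDirProd_def monoid.defs)

lemma RDirProd_one [simp]: "\<one>\<^bsub>RDirProd A B\<^esub> = (\<one>\<^bsub>A\<^esub>, \<one>\<^bsub>B\<^esub>)"
  by (simp add: RDirProd_def DirProd_def monoid.defs)

declare RDirProd_carrier [simp]

lemma cring_RDirProd: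
  assumes "cring A" "cring B"
  shows "cring (RDirProd A B)"
proof -
  interpret A: cring A by fact
  interpret B: cring B by fact
  interpret P: ring "RDirProd A B" by (rule RDirProd_ring) unfold_locales
  show ?thesis
    by (intro cring.intro comm_monoid.intro comm_monoid_axioms.intro P.ring_axioms P.monoid_axioms)
      (auto simp: A.m_comm B.m_comm)
qed

lemma finsum_RDirProd:
  assumes "ring A" "ring B" "finite I" "g \<in> I \<rightarrow> carrier A" "h \<in> I \<rightarrow> carrier B"
  shows "finsum (RDirProd A B) (\<lambda>i. (g i, h i)) I = (finsum A g I, finsum B h I)"
proof -
  interpret A: ring A by fact
  interpret B: ring B by fact
  interpret P: ring "RDirProd A B" by (rule RDirProd_ring) unfold_locales
  show ?thesis
    using assms(3-5)
  proof (induction I rule: finite_induct)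
    case (insert i I)
    then have "finsum (RDirProd A B) (\<lambda>i. (g i, h i)) (insert i I)
        = (g i, h i) \<oplus>\<^bsub>RDirProd A B\<^esub> finsum (RDirProd A B) (\<lambda>i. (g i, h i)) I"
      by (intro P.finsum_insert) auto
    with insert show ?case
      by simp
  qed simp
qed

lemma regular_elem_RDirProd_iff:
  assumes "ring A" "ring B"
  shows "regular_elem (RDirProd A B) (a, b) \<longleftrightarrow> regular_elem A a \<and> regular_elem B b"
proof
  interpret A: ring A by fact
  interpret B: ring B by fact
  assume reg: "regular_elem (RDirProd A B) (a, b)"
  then have ab: "a \<in> carrier A" "b \<in> carrier B"
    by (auto simp: regular_elem_def)
  have cancel: "p = \<zero>\<^bsub>RDirProd A B\<^esub>"
    if "p \<in> carrier (RDirProd A B)" "(a, b) \<otimes>\<^bsub>RDirProd A B\<^esub> p = \<zero>\<^bsub>RDirProd A B\<^esub>" for p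
    using reg that unfolding regular_elem_def by blast
  show "regular_elem A a \<and> regular_elem B b"
    unfolding regular_elem_def
  proof (intro conjI ab ballI impI)
    fix y assume y: "y \<in> carrier A" "a \<otimes>\<^bsub>A\<^esub> y = \<zero>\<^bsub>A\<^esub>"
    have "(y, \<zero>\<^bsub>B\<^esub>) = \<zero>\<^bsub>RDirProd A B\<^esub>"
      by (rule cancel) (simp_all add: ab y)
    then show "y = \<zero>\<^bsub>A\<^esub>" by simp
  next
    fix y assume y: "y \<in> carrier B" "b \<otimes>\<^bsub>B\<^esub> y = \<zero>\<^bsub>B\<^esub>"
    have "(\<zero>\<^bsub>A\<^esub>, y) = \<zero>\<^bsub>RDirProd A B\<^esub>"
      by (rule cancel) (simp_all add: ab y)
    then show "y = \<zero>\<^bsub>B\<^esub>" by simp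
  qed
next
  assume "regular_elem A a \<and> regular_elem B b"
  then show "regular_elem (RDirProd A B) (a, b)"
    unfolding regular_elem_def by (auto simp: mem_Times_iff)
qed

lemma ideal_Times:
  assumes "ring A" "ring B" "ideal I A" "ideal I' B"
  shows "ideal (I \<times> I') (RDirProd A B)"
proof (rule idealI)
  show "ring (RDirProd A B)" by (rule RDirProd_ring) fact+
  show "subgroup (I \<times> I') (add_monoid (RDirProd A B))"
    unfolding RDirProd_add_monoid using assms
    by (intro DirProd_subgroups) (auto intro: abelian_group.a_group ring.is_abelian_group
        additive_subgroup.a_subgroup ideal.axioms(1))
qed (use assms in \<open>auto simp: ideal.I_l_closed ideal.I_r_closed\<close>)

lemma ring_hom_ring_fst: "ring A \<Longrightarrow> ring B \<Longrightarrow> ring_hom_ring (RDirProd A B) A fst"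
  by (rule ring_hom_ringI) (auto simp: RDirProd_ring)

lemma ring_hom_ring_snd: "ring A \<Longrightarrow> ring B \<Longrightarrow> ring_hom_ring (RDirProd A B) B snd"
  by (rule ring_hom_ringI) (auto simp: RDirProd_ring)

lemma ideal_RDirProd_eq_Times:
  assumes "ring A" "ring B" "ideal G (RDirProd A B)"
  shows "G = fst ` G \<times> snd ` G"
proof
  interpret A: ring A by fact
  interpret B: ring B by fact
  interpret G: ideal G "RDirProd A B" by fact
  show "fst ` G \<times> snd ` G \<subseteq> G"
  proof clarify
    fix x y y' x' assume xy': "(x, y') \<in> G" and x'y: "(x', y) \<in> G"
    then have carr: "x \<in> carrier A" "y \<in> carrier B" "x' \<in> carrier A" "y' \<in> carrier B"
      using G.a_subset by auto
    have "(\<one>\<^bsub>A\<^esub>, \<zero>\<^bsub>B\<^esub>) \<otimes>\<^bsub>RDirProd A B\<^esub> (x, y') \<in> G"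
      using xy' by (intro G.I_l_closed) auto
    moreover have "(\<zero>\<^bsub>A\<^esub>, \<one>\<^bsub>B\<^esub>) \<otimes>\<^bsub>RDirProd A B\<^esub> (x', y) \<in> G"
      using x'y by (intro G.I_l_closed) auto
    ultimately have "(x, \<zero>\<^bsub>B\<^esub>) \<oplus>\<^bsub>RDirProd A B\<^esub> (\<zero>\<^bsub>A\<^esub>, y) \<in> G"
      using carr by (intro additive_subgroup.a_closed[OF ideal.axioms(1)[OF assms(3)]]) simp_all
    with carr show "(fst (x, y'), snd (x', y)) \<in> G" by simp
  qed
qed (rule subset_fst_snd)

lemma ideal_fst_image:
  assumes "ring A" "ring B" "ideal G (RDirProd A B)"
  shows "ideal (fst ` G) A"
proof (rule ring_hom_ring.ideal_image[OF ring_hom_ring_fst[OF assms(1,2)] _ assms(3)])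
  have "carrier B \<noteq> {}"
    using monoid.one_closed[OF ring.is_monoid[OF assms(2)]] by blast
  then show "fst ` carrier (RDirProd A B) = carrier A" by simp
qed

lemma ideal_snd_image:
  assumes "ring A" "ring B" "ideal G (RDirProd A B)"
  shows "ideal (snd ` G) B"
proof (rule ring_hom_ring.ideal_image[OF ring_hom_ring_snd[OF assms(1,2)] _ assms(3)])
  have "carrier A \<noteq> {}"
    using monoid.one_closed[OF ring.is_monoid[OF assms(1)]] by blast
  then show "snd ` carrier (RDirProd A B) = carrier B" by simp
qed

lemma genideal_RDirProd:
  assumes "ring A" "ring B" "S \<subseteq> carrier (RDirProd A B)"
  shows "genideal (RDirProd A B) S = genideal A (fst ` S) \<times> genideal B (snd ` S)"
proof
  interpret A: ring A by fact
  interpret B: ring B by fact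
  interpret P: ring "RDirProd A B" by (rule RDirProd_ring) fact+
  have S: "fst ` S \<subseteq> carrier A" "snd ` S \<subseteq> carrier B"
    using assms(3) by auto
  show "genideal (RDirProd A B) S \<subseteq> genideal A (fst ` S) \<times> genideal B (snd ` S)"
  proof (rule P.genideal_minimal)
    show "ideal (genideal A (fst ` S) \<times> genideal B (snd ` S)) (RDirProd A B)"
      by (intro ideal_Times A.genideal_ideal B.genideal_ideal assms(1,2) S)
    show "S \<subseteq> genideal A (fst ` S) \<times> genideal B (snd ` S)"
      using subset_fst_snd A.genideal_self[OF S(1)] B.genideal_self[OF S(2)] by blast
  qed
  define G where "G = genideal (RDirProd A B) S"
  have G: "ideal G (RDirProd A B)" "S \<subseteq> G"
    unfolding G_def using assms(3) by (rule P.genideal_ideal, rule P.genideal_self)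
  have "genideal A (fst ` S) \<subseteq> fst ` G"
    using G by (intro A.genideal_minimal ideal_fst_image[OF assms(1,2)]) auto
  moreover have "genideal B (snd ` S) \<subseteq> snd ` G"
    using G by (intro B.genideal_minimal ideal_snd_image[OF assms(1,2)]) auto
  ultimately show "genideal A (fst ` S) \<times> genideal B (snd ` S) \<subseteq> G"
    using ideal_RDirProd_eq_Times[OF assms(1,2) G(1)] by blast
qed

lemma fg_ideal_Times:
  assumes "ring A" "ring B" "fg_ideal A I" "fg_ideal B I'"
  shows "fg_ideal (RDirProd A B) (I \<times> I')"
proof -
  interpret A: ring A by fact
  interpret B: ring B by fact
  txt \<open>Adding \<open>0\<close> makes both generating sets nonempty, so that \<open>fst ` (T \<times> T') = T\<close>.\<close>
  obtain S S' where S: "finite S" "S \<subseteq> carrier A" "I = genideal A (insert \<zero>\<^bsub>A\<^esub> S)"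
    and S': "finite S'" "S' \<subseteq> carrier B" "I' = genideal B (insert \<zero>\<^bsub>B\<^esub> S')"
    using assms(3,4) A.genideal_insert_zero B.genideal_insert_zero unfolding fg_ideal_def by metis
  let ?T = "insert \<zero>\<^bsub>A\<^esub> S \<times> insert \<zero>\<^bsub>B\<^esub> S'"
  have T: "?T \<subseteq> carrier (RDirProd A B)" "finite ?T"
    using S S' by auto
  have "fst ` ?T = insert \<zero>\<^bsub>A\<^esub> S" "snd ` ?T = insert \<zero>\<^bsub>B\<^esub> S'"
    by (simp_all only: fst_image_times snd_image_times insert_not_empty if_False)
  then have "genideal (RDirProd A B) ?T = I \<times> I'"
    by (simp only: genideal_RDirProd[OF assms(1,2) T(1)] S(3) S'(3))
  moreover have "ideal (I \<times> I') (RDirProd A B)"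
    using assms(3,4) unfolding fg_ideal_def by (blast intro: ideal_Times assms(1,2))
  ultimately show ?thesis
    using T unfolding fg_ideal_def by blast
qed

lemma fg_ideal_RDirProdE:
  assumes "ring A" "ring B" "fg_ideal (RDirProd A B) G"
  obtains I I' where "G = I \<times> I'" "fg_ideal A I" "fg_ideal B I'"
proof -
  obtain S where S: "finite S" "S \<subseteq> carrier (RDirProd A B)" "G = genideal (RDirProd A B) S"
    using assms(3) unfolding fg_ideal_def by blast
  interpret A: ring A by fact
  interpret B: ring B by fact
  have "fst ` S \<subseteq> carrier A" "snd ` S \<subseteq> carrier B"
    using S(2) by auto
  then have "fg_ideal A (genideal A (fst ` S))" "fg_ideal B (genideal B (snd ` S))"
    using S(1) unfolding fg_ideal_def
    by (auto intro!: A.genideal_ideal B.genideal_ideal exI[of _ "fst ` S"] exI[of _ "snd ` S"])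
  with that show thesis
    using S(3) genideal_RDirProd[OF assms(1,2) S(2)] by blast
qed

lemma regular_ideal_Times_iff:
  assumes "ring A" "ring B" "ideal I A" "ideal I' B"
  shows "regular_ideal (RDirProd A B) (I \<times> I') \<longleftrightarrow> regular_ideal A I \<and> regular_ideal B I'"
  using assms ideal_Times[OF assms]
  by (auto simp: regular_ideal_def regular_elem_RDirProd_iff)

lemma inverse_certificate_Times:
  assumes "ring A" "ring B" "ideal I A" "ideal I' B"
    and "inverse_certificate A I s n a c" "inverse_certificate B I' s' n a' c'"
  shows "inverse_certificate (RDirProd A B) (I \<times> I') (s, s') n (\<lambda>i. (a i, a' i)) (\<lambda>i. (c i, c' i))"
proof -
  interpret A: ring A by fact
  interpret B: ring B by fact
  note cert = inverse_certificateD[OF assms(5)] and cert' = inverse_certificateD[OF assms(6)]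
  show ?thesis
  proof (rule inverse_certificateI)
    show "regular_elem (RDirProd A B) (s, s')"
      using cert(1) cert'(1) regular_elem_RDirProd_iff[OF assms(1,2)] by blast
    fix i x assume "i < n" "x \<in> I \<times> I'"
    then obtain x1 x2 r1 r2 where "x = (x1, x2)"
      and "r1 \<in> carrier A" "c i \<otimes>\<^bsub>A\<^esub> x1 = s \<otimes>\<^bsub>A\<^esub> r1"
      and "r2 \<in> carrier B" "c' i \<otimes>\<^bsub>B\<^esub> x2 = s' \<otimes>\<^bsub>B\<^esub> r2"
      using cert(5) cert'(5) by (metis mem_Times_iff prod.collapse)
    then show "\<exists>r \<in> carrier (RDirProd A B).
        (c i, c' i) \<otimes>\<^bsub>RDirProd A B\<^esub> x = (s, s') \<otimes>\<^bsub>RDirProd A B\<^esub> r"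
      by (intro bexI[of _ "(r1, r2)"]) auto
  next
    have "finsum (RDirProd A B) (\<lambda>i. (a i \<otimes>\<^bsub>A\<^esub> c i, a' i \<otimes>\<^bsub>B\<^esub> c' i)) {..<n} =
        (finsum A (\<lambda>i. a i \<otimes>\<^bsub>A\<^esub> c i) {..<n}, finsum B (\<lambda>i. a' i \<otimes>\<^bsub>B\<^esub> c' i) {..<n})"
      using cert(3,4) cert'(3,4) ideal.Icarr[OF assms(3)] ideal.Icarr[OF assms(4)]
      by (intro finsum_RDirProd assms(1,2)) auto
    then show "finsum (RDirProd A B) (\<lambda>i. (a i, a' i) \<otimes>\<^bsub>RDirProd A B\<^esub> (c i, c' i)) {..<n} = (s, s')"
      using cert(6) cert'(6) by simp
  qed (use cert(3,4) cert'(3,4) in auto)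
qed

lemma invertible_ideal_Times_iff:
  assumes "ring A" "ring B" "ideal I A" "ideal I' B"
  shows "invertible_ideal (RDirProd A B) (I \<times> I') \<longleftrightarrow> invertible_ideal A I \<and> invertible_ideal B I'"
proof
  assume "invertible_ideal (RDirProd A B) (I \<times> I')"
  then obtain s n a c where cert: "inverse_certificate (RDirProd A B) (I \<times> I') s n a c"
    unfolding invertible_ideal_iff_certificate by blast
  have "regular_elem (RDirProd A B) (fst s, snd s)"
    using cert by (simp add: inverse_certificate_def)
  then have reg: "regular_elem A (fst s)" "regular_elem B (snd s)"
    unfolding regular_elem_RDirProd_iff[OF assms(1,2)] by blast+
  have "I \<noteq> {}" "I' \<noteq> {}"
    using ideal_zero_closed[OF assms(3)] ideal_zero_closed[OF assms(4)] by blast+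
  then have "fst ` (I \<times> I') = I" "snd ` (I \<times> I') = I'"
    by simp_all
  then have "inverse_certificate A I (fst s) n (fst \<circ> a) (fst \<circ> c)"
    "inverse_certificate B I' (snd s) n (snd \<circ> a) (snd \<circ> c)"
    using inverse_certificate_image[OF ring_hom_ring_fst[OF assms(1,2)] reg(1) ideal_Times[OF assms] cert]
      inverse_certificate_image[OF ring_hom_ring_snd[OF assms(1,2)] reg(2) ideal_Times[OF assms] cert]
    by (simp_all only:)
  with assms(3,4) show "invertible_ideal A I \<and> invertible_ideal B I'"
    unfolding invertible_ideal_iff_certificate by blast
next
  assume "invertible_ideal A I \<and> invertible_ideal B I'"
  then obtain s n a c s' n' a' c' where
    "inverse_certificate A I s n a c" "inverse_certificate B I' s' n' a' c'"
    unfolding invertible_ideal_iff_certificate by blast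
  then have "inverse_certificate A I s (n + n')
      (\<lambda>i. if i < n then a i else \<zero>\<^bsub>A\<^esub>) (\<lambda>i. if i < n then c i else \<zero>\<^bsub>A\<^esub>)"
    "inverse_certificate B I' s' (n + n')
      (\<lambda>i. if i < n' then a' i else \<zero>\<^bsub>B\<^esub>) (\<lambda>i. if i < n' then c' i else \<zero>\<^bsub>B\<^esub>)"
    by (auto intro!: ring.inverse_certificate_pad[OF assms(1,3)]
        ring.inverse_certificate_pad[OF assms(2,4)])
  then show "invertible_ideal (RDirProd A B) (I \<times> I')"
    unfolding invertible_ideal_iff_certificate
    by (intro conjI ideal_Times[OF assms] exI) (rule inverse_certificate_Times[OF assms])
qed

lemma pruefer_ring_RDirProd_invertible_Times:
  assumes "ring A" "ring B" "pruefer_ring (RDirProd A B)"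
    and "fg_ideal A I" "regular_ideal A I" "fg_ideal B I'" "regular_ideal B I'"
  shows "invertible_ideal A I \<and> invertible_ideal B I'"
proof -
  note ideals = fg_ideal_imp_ideal[OF assms(4)] fg_ideal_imp_ideal[OF assms(6)]
  have "fg_ideal (RDirProd A B) (I \<times> I')"
    by (rule fg_ideal_Times[OF assms(1,2,4,6)])
  moreover have "regular_ideal (RDirProd A B) (I \<times> I')"
    using assms(5,7) regular_ideal_Times_iff[OF assms(1,2) ideals] by blast
  ultimately have "invertible_ideal (RDirProd A B) (I \<times> I')"
    using assms(3) unfolding pruefer_ring_def by blast
  then show ?thesis
    using invertible_ideal_Times_iff[OF assms(1,2) ideals] by blast
qed

lemma pruefer_ring_RDirProd_iff:
  assumes "cring A" "cring B"
  shows "pruefer_ring (RDirProd A B) \<longleftrightarrow> pruefer_ring A \<and> pruefer_ring B"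
proof -
  have A: "ring A" and B: "ring B"
    using assms cring.axioms(1) by blast+
  show ?thesis
  proof
    assume P: "pruefer_ring (RDirProd A B)"
    show "pruefer_ring A \<and> pruefer_ring B"
      using assms
        pruefer_ring_RDirProd_invertible_Times[OF A B P _ _ fg_ideal_carrier[OF B] regular_ideal_carrier[OF B]]
        pruefer_ring_RDirProd_invertible_Times[OF A B P fg_ideal_carrier[OF A] regular_ideal_carrier[OF A]]
      unfolding pruefer_ring_def by blast
  next
    assume PA_PB: "pruefer_ring A \<and> pruefer_ring B"
    have "invertible_ideal (RDirProd A B) G"
      if "fg_ideal (RDirProd A B) G" "regular_ideal (RDirProd A B) G" for G
    proof -
      obtain I I' where G: "G = I \<times> I'" "fg_ideal A I" "fg_ideal B I'"
        using fg_ideal_RDirProdE[OF A B \<open>fg_ideal _ G\<close>] .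
      have ideals: "ideal I A" "ideal I' B"
        using G(2,3) by (blast intro: fg_ideal_imp_ideal)+
      have "regular_ideal A I" "regular_ideal B I'"
        using that(2) unfolding G(1) regular_ideal_Times_iff[OF A B ideals] by blast+
      with G(2,3) PA_PB have "invertible_ideal A I" "invertible_ideal B I'"
        unfolding pruefer_ring_def by blast+
      then show ?thesis
        unfolding G(1) invertible_ideal_Times_iff[OF A B ideals] by blast
    qed
    then show "pruefer_ring (RDirProd A B)"
      using cring_RDirProd[OF assms] unfolding pruefer_ring_def by blast
  qed
qed


section \<open>Amalgamations\<close>

lemma amalgamation_mult [simp]: "x \<otimes>\<^bsub>amalgamation A B f J\<^esub> y = x \<otimes>\<^bsub>RDirProd A B\<^esub> y"
  by (simp add: amalgamation_def)

lemma amalgamation_add [simp]: "x \<oplus>\<^bsub>amalgamation A B f J\<^esub> y = x \<oplus>\<^bsub>RDirProd A B\<^esub> y"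
  by (simp add: amalgamation_def)

lemma amalgamation_zero [simp]: "\<zero>\<^bsub>amalgamation A B f J\<^esub> = \<zero>\<^bsub>RDirProd A B\<^esub>"
  by (simp add: amalgamation_def)

lemma amalgamation_one [simp]: "\<one>\<^bsub>amalgamation A B f J\<^esub> = \<one>\<^bsub>RDirProd A B\<^esub>"
  by (simp add: amalgamation_def)

lemma amalgamation_carrier_iff:
  assumes "ring B" "f \<in> ring_hom A B" "ideal J B"
  shows "(x, y) \<in> carrier (amalgamation A B f J) \<longleftrightarrow>
    x \<in> carrier A \<and> y \<in> carrier B \<and> y \<ominus>\<^bsub>B\<^esub> f x \<in> J"
proof -
  interpret B: ring B by fact
  interpret J: ideal J B by fact
  have carrier: "carrier (amalgamation A B f J) = {(a, f a \<oplus>\<^bsub>B\<^esub> b) | a b. a \<in> carrier A \<and> b \<in> J}"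
    by (simp add: amalgamation_def)
  show ?thesis
  proof
    assume "(x, y) \<in> carrier (amalgamation A B f J)"
    then obtain b where b: "x \<in> carrier A" "b \<in> J" "y = f x \<oplus>\<^bsub>B\<^esub> b"
      unfolding carrier by blast
    moreover have "f x \<in> carrier B" "b \<in> carrier B"
      using b(1,2) ring_hom_closed[OF assms(2)] J.Icarr by auto
    ultimately show "x \<in> carrier A \<and> y \<in> carrier B \<and> y \<ominus>\<^bsub>B\<^esub> f x \<in> J"
      by (simp add: B.minus_eq B.a_comm B.a_lcomm B.r_neg)
  next
    assume xy: "x \<in> carrier A \<and> y \<in> carrier B \<and> y \<ominus>\<^bsub>B\<^esub> f x \<in> J"
    moreover have "f x \<in> carrier B"
      using xy ring_hom_closed[OF assms(2)] by blast
    ultimately have "y = f x \<oplus>\<^bsub>B\<^esub> (y \<ominus>\<^bsub>B\<^esub> f x)"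
      by (simp add: B.minus_eq B.a_comm B.a_lcomm B.r_neg)
    with xy show "(x, y) \<in> carrier (amalgamation A B f J)"
      unfolding carrier by blast
  qed
qed

lemma amalgamation_carrier_subset:
  assumes "ring B" "f \<in> ring_hom A B" "ideal J B"
  shows "carrier (amalgamation A B f J) \<subseteq> carrier (RDirProd A B)"
  using amalgamation_carrier_iff[OF assms] by auto

lemma amalgamation_eq_RDirProd:
  assumes "ring B" "f \<in> ring_hom A B"
  shows "amalgamation A B f (carrier B) = RDirProd A B"
proof -
  interpret B: ring B by fact
  have "carrier (amalgamation A B f (carrier B)) = carrier (RDirProd A B)"
    using amalgamation_carrier_iff[OF assms B.oneideal] ring_hom_closed[OF assms(2)] by auto
  then show ?thesis
    by (simp add: amalgamation_def)
qed

lemma preimage_Times_subset_amalgamation: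
  assumes "ring B" "f \<in> ring_hom A B" "ideal J B"
  shows "{a \<in> carrier A. f a \<in> J} \<times> J \<subseteq> carrier (amalgamation A B f J)"
proof clarify
  interpret B: ring B by fact
  interpret J: ideal J B by fact
  fix a b assume "a \<in> carrier A" "f a \<in> J" "b \<in> J"
  moreover from this have "b \<ominus>\<^bsub>B\<^esub> f a \<in> J"
    by (simp add: B.minus_eq additive_subgroup.a_closed[OF ideal.axioms(1)[OF assms(3)]])
  ultimately show "(a, b) \<in> carrier (amalgamation A B f J)"
    using amalgamation_carrier_iff[OF assms] J.Icarr by blast
qed

lemma regular_elem_amalgamationI:
  assumes "ring B" "f \<in> ring_hom A B" "ideal J B"
    and "regular_elem (RDirProd A B) p" "p \<in> carrier (amalgamation A B f J)"
  shows "regular_elem (amalgamation A B f J) p"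
  using assms(4,5) amalgamation_carrier_subset[OF assms(1-3)]
  unfolding regular_elem_def amalgamation_mult amalgamation_zero by blast

lemma regular_elem_amalgamation_fst:
  assumes "cring A" "ring B" "f \<in> ring_hom A B" "ideal J B"
    and "regular_ideal A {a \<in> carrier A. f a \<in> J}"
    and "regular_elem (amalgamation A B f J) (x, y)"
  shows "regular_elem A x"
proof -
  interpret A: cring A by fact
  interpret B: ring B by fact
  interpret J: ideal J B by fact
  obtain s0 where s0: "s0 \<in> carrier A" "f s0 \<in> J" "regular_elem A s0"
    using assms(5) unfolding regular_ideal_def by blast
  have "(x, y) \<in> carrier (amalgamation A B f J)"
    using assms(6) unfolding regular_elem_def by blast
  then have xy: "x \<in> carrier A" "y \<in> carrier B"
    using amalgamation_carrier_subset[OF assms(2-4)] by auto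
  have "u = \<zero>\<^bsub>A\<^esub>" if u: "u \<in> carrier A" "x \<otimes>\<^bsub>A\<^esub> u = \<zero>\<^bsub>A\<^esub>" for u
  proof -
    have "f (s0 \<otimes>\<^bsub>A\<^esub> u) \<in> J"
      using s0 u J.I_r_closed ring_hom_closed[OF assms(3)] ring_hom_mult[OF assms(3)] by simp
    then have "(s0 \<otimes>\<^bsub>A\<^esub> u, \<zero>\<^bsub>B\<^esub>) \<in> carrier (amalgamation A B f J)"
      using subsetD[OF preimage_Times_subset_amalgamation[OF assms(2-4)]] s0(1) u(1)
        ideal_zero_closed[OF assms(4)] by simp
    moreover have "(x, y) \<otimes>\<^bsub>RDirProd A B\<^esub> (s0 \<otimes>\<^bsub>A\<^esub> u, \<zero>\<^bsub>B\<^esub>) = \<zero>\<^bsub>RDirProd A B\<^esub>"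
      using xy s0(1) u A.m_lcomm[OF xy(1) s0(1) u(1)] by simp
    ultimately have "(s0 \<otimes>\<^bsub>A\<^esub> u, \<zero>\<^bsub>B\<^esub>) = \<zero>\<^bsub>RDirProd A B\<^esub>"
      using assms(6) unfolding regular_elem_def amalgamation_mult amalgamation_zero by blast
    then show ?thesis
      using s0(3) u(1) unfolding regular_elem_def by auto
  qed
  with xy(1) show ?thesis
    unfolding regular_elem_def by blast
qed

lemma regular_elem_amalgamation_snd:
  assumes "ring A" "cring B" "f \<in> ring_hom A B" "ideal J B" "regular_ideal B J"
    and "regular_elem (amalgamation A B f J) (x, y)"
  shows "regular_elem B y"
proof -
  interpret A: ring A by fact
  interpret B: cring B by fact
  interpret J: ideal J B by fact
  obtain j0 where j0: "j0 \<in> J" "regular_elem B j0"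
    using assms(5) unfolding regular_ideal_def by blast
  have "(x, y) \<in> carrier (amalgamation A B f J)"
    using assms(6) unfolding regular_elem_def by blast
  then have xy: "x \<in> carrier A" "y \<in> carrier B"
    using amalgamation_carrier_subset[OF B.ring_axioms assms(3,4)] by auto
  have "v = \<zero>\<^bsub>B\<^esub>" if v: "v \<in> carrier B" "y \<otimes>\<^bsub>B\<^esub> v = \<zero>\<^bsub>B\<^esub>" for v
  proof -
    have "j0 \<otimes>\<^bsub>B\<^esub> v \<in> J"
      using j0(1) v(1) by (rule J.I_r_closed)
    then have "(\<zero>\<^bsub>A\<^esub>, j0 \<otimes>\<^bsub>B\<^esub> v) \<in> carrier (amalgamation A B f J)"
      using subsetD[OF preimage_Times_subset_amalgamation[OF B.ring_axioms assms(3,4)]]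
        ring_hom_zero[OF assms(3) A.ring_axioms B.ring_axioms]
        ideal_zero_closed[OF assms(4)] by simp
    moreover have "(x, y) \<otimes>\<^bsub>RDirProd A B\<^esub> (\<zero>\<^bsub>A\<^esub>, j0 \<otimes>\<^bsub>B\<^esub> v) = \<zero>\<^bsub>RDirProd A B\<^esub>"
      using xy v J.Icarr[OF j0(1)] B.m_lcomm[OF xy(2) J.Icarr[OF j0(1)] v(1)] by simp
    ultimately have "(\<zero>\<^bsub>A\<^esub>, j0 \<otimes>\<^bsub>B\<^esub> v) = \<zero>\<^bsub>RDirProd A B\<^esub>"
      using assms(6) unfolding regular_elem_def amalgamation_mult amalgamation_zero by blast
    then show ?thesis
      using j0(2) v(1) unfolding regular_elem_def by auto
  qed
  with xy(2) show ?thesis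
    unfolding regular_elem_def by blast
qed

lemma amalgamation_cofactors_in_preimage:
  assumes "ring A" "ring B" "f \<in> ring_hom A B" "ideal J B"
    and "regular_elem A s1" "regular_elem B \<sigma>" "s0 \<in> carrier A" "j0 \<in> carrier B"
    and "c \<in> carrier (amalgamation A B f J)"
    and r1: "r1 \<in> carrier (amalgamation A B f J)"
      "c \<otimes>\<^bsub>RDirProd A B\<^esub> (s0, j0) = (s1, \<sigma>) \<otimes>\<^bsub>RDirProd A B\<^esub> r1"
    and r2: "r2 \<in> carrier (amalgamation A B f J)"
      "c \<otimes>\<^bsub>RDirProd A B\<^esub> (s0, \<zero>\<^bsub>B\<^esub>) = (s1, \<sigma>) \<otimes>\<^bsub>RDirProd A B\<^esub> r2"
  shows "f (fst r1) \<in> J" "f (fst r2) \<in> J"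
proof -
  interpret A: ring A by fact
  interpret B: ring B by fact
  interpret J: ideal J B by fact
  txt \<open>Regularity of \<open>\<sigma>\<close> kills the \<open>B\<close>-coordinate of \<open>r2\<close>, and regularity of \<open>s1\<close>
    makes \<open>r1\<close> and \<open>r2\<close> agree in the \<open>A\<close>-coordinate.\<close>
  note carrier_iff = amalgamation_carrier_iff[OF assms(2-4)]
  obtain \<gamma> \<delta> where c: "c = (\<gamma>, \<delta>)" "\<gamma> \<in> carrier A" "\<delta> \<in> carrier B"
    using assms(9) carrier_iff by (cases c) blast
  obtain \<rho>1 \<tau>1 where r1': "r1 = (\<rho>1, \<tau>1)" "\<rho>1 \<in> carrier A" "\<tau>1 \<in> carrier B"
    using r1(1) carrier_iff by (cases r1) blast
  obtain \<rho>2 \<tau>2 where r2': "r2 = (\<rho>2, \<tau>2)" "\<rho>2 \<in> carrier A" "\<tau>2 \<in> carrier B"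
    "\<tau>2 \<ominus>\<^bsub>B\<^esub> f \<rho>2 \<in> J"
    using r2(1) carrier_iff by (cases r2) blast
  have "\<sigma> \<otimes>\<^bsub>B\<^esub> \<tau>2 = \<zero>\<^bsub>B\<^esub>" and eq2: "\<gamma> \<otimes>\<^bsub>A\<^esub> s0 = s1 \<otimes>\<^bsub>A\<^esub> \<rho>2"
    using r2(2) c r2' by simp_all
  then have "\<tau>2 = \<zero>\<^bsub>B\<^esub>"
    using assms(6) r2'(3) unfolding regular_elem_def by blast
  then have "\<ominus>\<^bsub>B\<^esub> f \<rho>2 \<in> J"
    using r2'(2,4) ring_hom_closed[OF assms(3)] by (simp add: B.minus_eq)
  then show f_\<rho>2: "f (fst r2) \<in> J"
    using J.a_inv_closed r2'(1,2) ring_hom_closed[OF assms(3)] by fastforce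
  have "s1 \<otimes>\<^bsub>A\<^esub> \<rho>1 = s1 \<otimes>\<^bsub>A\<^esub> \<rho>2"
    using r1(2) c r1' eq2 by simp
  then have "\<rho>1 = \<rho>2"
    using A.regular_elem_cancel[OF assms(5) r1'(2) r2'(2)] by blast
  with f_\<rho>2 r1'(1) r2'(1) show "f (fst r1) \<in> J"
    by simp
qed

lemma ideal_amalgamation_preimage:
  assumes "ring (amalgamation A B f J)" "ring B" "f \<in> ring_hom A B" "ideal J B"
  shows "ideal {t \<in> carrier (amalgamation A B f J). f (fst t) \<in> J} (amalgamation A B f J)"
proof -
  let ?R = "amalgamation A B f J"
  have R_carrier: "carrier ?R \<subseteq> carrier A \<times> carrier B"
    using amalgamation_carrier_subset[OF assms(2-4)] by simp
  have "(\<lambda>t. f (fst t)) \<in> ring_hom ?R B"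
  proof (rule ring_hom_memI)
    fix p q assume "p \<in> carrier ?R" "q \<in> carrier ?R"
    then obtain a b a' b' where "p = (a, b)" "q = (a', b')" "a \<in> carrier A" "a' \<in> carrier A"
      using R_carrier by blast
    then show "f (fst (p \<otimes>\<^bsub>?R\<^esub> q)) = f (fst p) \<otimes>\<^bsub>B\<^esub> f (fst q)"
      "f (fst (p \<oplus>\<^bsub>?R\<^esub> q)) = f (fst p) \<oplus>\<^bsub>B\<^esub> f (fst q)"
      by (simp_all add: ring_hom_mult[OF assms(3)] ring_hom_add[OF assms(3)])
  qed (use R_carrier ring_hom_closed[OF assms(3)] ring_hom_one[OF assms(3)] in auto)
  then show ?thesis
    by (rule ring_hom_ring.ideal_vimage[OF ring_hom_ringI2[OF assms(1,2)] assms(4)])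
qed

lemma regular_fg_ideal_amalgamation:
  assumes "ring (amalgamation A B f J)" "ring A" "ring B" "f \<in> ring_hom A B" "ideal J B"
    and "s0 \<in> carrier A" "f s0 \<in> J" "regular_elem A s0" "j0 \<in> J" "regular_elem B j0"
  defines "G \<equiv> genideal (amalgamation A B f J) {(s0, j0), (s0, \<zero>\<^bsub>B\<^esub>)}"
  shows "fg_ideal (amalgamation A B f J) G" "regular_ideal (amalgamation A B f J) G"
proof -
  interpret R: ring "amalgamation A B f J" by fact
  have "(s0, j0) \<in> {a \<in> carrier A. f a \<in> J} \<times> J" "(s0, \<zero>\<^bsub>B\<^esub>) \<in> {a \<in> carrier A. f a \<in> J} \<times> J"
    using assms(6,7,9) ideal_zero_closed[OF assms(5)] by simp_all
  then have gens: "{(s0, j0), (s0, \<zero>\<^bsub>B\<^esub>)} \<subseteq> carrier (amalgamation A B f J)"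
    using preimage_Times_subset_amalgamation[OF assms(3-5)] by blast
  then have G: "ideal G (amalgamation A B f J)" "{(s0, j0), (s0, \<zero>\<^bsub>B\<^esub>)} \<subseteq> G"
    unfolding G_def by (rule R.genideal_ideal, rule R.genideal_self)
  show "fg_ideal (amalgamation A B f J) G"
    unfolding fg_ideal_def using G(1) gens by (intro conjI exI[of _ "{(s0, j0), (s0, \<zero>\<^bsub>B\<^esub>)}"]) (simp_all add: G_def)
  have "regular_elem (RDirProd A B) (s0, j0)"
    unfolding regular_elem_RDirProd_iff[OF assms(2,3)] using assms(8,10) ..
  then have "regular_elem (amalgamation A B f J) (s0, j0)"
    using gens by (intro regular_elem_amalgamationI[OF assms(3-5)]) simp_all
  then show "regular_ideal (amalgamation A B f J) G"
    using G unfolding regular_ideal_def by blast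
qed

lemma pruefer_ring_amalgamationD:
  assumes "cring A" "cring B" "f \<in> ring_hom A B" "ideal J B"
    and "regular_ideal A {a \<in> carrier A. f a \<in> J}" "regular_ideal B J"
    and "pruefer_ring (amalgamation A B f J)"
  shows "J = carrier B"
proof -
  define R where "R = amalgamation A B f J"
  interpret A: cring A by fact
  interpret B: cring B by fact
  interpret J: ideal J B by fact
  interpret R: cring R
    using assms(7) unfolding pruefer_ring_def R_def by blast
  note hyps = B.ring_axioms assms(3,4)
  obtain s0 where s0: "s0 \<in> carrier A" "f s0 \<in> J" "regular_elem A s0"
    using assms(5) unfolding regular_ideal_def by blast
  obtain j0 where j0: "j0 \<in> J" "regular_elem B j0"
    using assms(6) unfolding regular_ideal_def by blast
  define K where "K = {t \<in> carrier R. f (fst t) \<in> J}"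
  have K: "ideal K R"
    unfolding K_def R_def by (rule ideal_amalgamation_preimage[OF R.ring_axioms[unfolded R_def] hyps])
  define g1 g2 where "g1 = (s0, j0)" and "g2 = (s0, \<zero>\<^bsub>B\<^esub>)"
  define G where "G = genideal R {g1, g2}"
  have "g1 \<in> {a \<in> carrier A. f a \<in> J} \<times> J" "g2 \<in> {a \<in> carrier A. f a \<in> J} \<times> J"
    using s0(1,2) j0(1) ideal_zero_closed[OF assms(4)] unfolding g1_def g2_def by simp_all
  then have gens_carrier: "{g1, g2} \<subseteq> carrier R"
    using preimage_Times_subset_amalgamation[OF hyps] unfolding R_def by blast
  then have gens: "{g1, g2} \<subseteq> G"
    unfolding G_def by (rule R.genideal_self)
  note G = regular_fg_ideal_amalgamation[OF R.ring_axioms[unfolded R_def] A.ring_axioms hyps s0 j0]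
  have "invertible_ideal R G"
    using assms(7) G unfolding pruefer_ring_def R_def G_def g1_def g2_def by blast
  then have "K = carrier R"
  proof (rule R.invertible_ideal_product_subset_imp_carrier[OF _ K])
    fix s c x
    assume s: "regular_elem R s" and c: "c \<in> carrier R"
      and cG: "\<forall>y \<in> G. \<exists>r \<in> carrier R. c \<otimes>\<^bsub>R\<^esub> y = s \<otimes>\<^bsub>R\<^esub> r" and "x \<in> G"
    obtain s1 \<sigma> where s_eq: "s = (s1, \<sigma>)"
      by (cases s)
    have reg: "regular_elem A s1" "regular_elem B \<sigma>"
      using regular_elem_amalgamation_fst[OF assms(1) hyps assms(5)]
        regular_elem_amalgamation_snd[OF A.ring_axioms assms(2-4,6)] s
      unfolding s_eq R_def by blast+
    define L where "L = {y \<in> carrier R. c \<otimes>\<^bsub>R\<^esub> y \<in> (\<otimes>\<^bsub>R\<^esub>) s ` K}"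
    have "s \<in> carrier R"
      using s unfolding regular_elem_def by blast
    then have L: "ideal L R"
      unfolding L_def by (rule ideal.helper_max_prime[OF R.ideal_scaled[OF _ K] R.is_cring c])
    obtain r1 r2 where r1: "r1 \<in> carrier R" "c \<otimes>\<^bsub>R\<^esub> g1 = s \<otimes>\<^bsub>R\<^esub> r1"
      and r2: "r2 \<in> carrier R" "c \<otimes>\<^bsub>R\<^esub> g2 = s \<otimes>\<^bsub>R\<^esub> r2"
      using cG gens by blast
    have "f (fst r1) \<in> J" "f (fst r2) \<in> J"
      using amalgamation_cofactors_in_preimage[OF A.ring_axioms hyps reg s0(1) J.Icarr[OF j0(1)]]
        c r1 r2 unfolding R_def g1_def g2_def s_eq by simp_all
    then have "{g1, g2} \<subseteq> L"
      using gens_carrier r1 r2 unfolding L_def K_def by auto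
    then have "G \<subseteq> L"
      unfolding G_def by (rule R.genideal_minimal[OF L])
    with \<open>x \<in> G\<close> show "c \<otimes>\<^bsub>R\<^esub> x \<in> (\<otimes>\<^bsub>R\<^esub>) s ` K"
      unfolding L_def by blast
  qed
  then have "\<one>\<^bsub>R\<^esub> \<in> K"
    by simp
  then have "\<one>\<^bsub>B\<^esub> \<in> J"
    using ring_hom_one[OF assms(3)] unfolding K_def R_def by simp
  then show ?thesis
    by (rule J.one_imp_carrier)
qed

theorem theorem3p1:
  fixes A :: "('a, 'm) ring_scheme" and B :: "('b, 'n) ring_scheme"
    and f :: "'a \<Rightarrow> 'b" and J :: "'b set"
  assumes "cring A" and "cring B"
    and "f \<in> ring_hom A B"
    and "ideal J B"
    and "regular_ideal A {a \<in> carrier A. f a \<in> J}"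
    and "regular_ideal B J"
  shows "pruefer_ring (amalgamation A B f J) \<longleftrightarrow>
           (pruefer_ring A \<and> pruefer_ring B \<and> J = carrier B)"
proof -
  have full: "amalgamation A B f (carrier B) = RDirProd A B"
    using amalgamation_eq_RDirProd[OF cring.axioms(1)[OF assms(2)] assms(3)] .
  show ?thesis
  proof
    assume P: "pruefer_ring (amalgamation A B f J)"
    then have "J = carrier B"
      by (rule pruefer_ring_amalgamationD[OF assms])
    with P full show "pruefer_ring A \<and> pruefer_ring B \<and> J = carrier B"
      using pruefer_ring_RDirProd_iff[OF assms(1,2)] by simp
  next
    assume "pruefer_ring A \<and> pruefer_ring B \<and> J = carrier B"
    with full show "pruefer_ring (amalgamation A B f J)"
      using pruefer_ring_RDirProd_iff[OF assms(1,2)] by simp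
  qed
qed

end
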